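(* Let $X=\{x_1,\dots,x_M\}\subset\mathbb{R}^n$ be finite and $\phi_1,\dots,\phi_N$ real functions on $X$ such that $V$, $V_{i,j}=\phi_j(x_i)$, has rank $N$. For every $w\in\mathbb{R}^M_{\geq0}$ at which $E$ is defined (i.e. $\det G(w)>0$) and every $u\in\mathbb{R}^M$, $$u^t\,\mathrm{Hess}\,E(w)\,u=0\iff \sum_{i=1}^M u_i\,\phi_h(x_i)\phi_k(x_i)=0\ \text{ for all } h,k\in\{1,\dots,N\},$$ i.e. if and only if $V(\Phi^2;X)^tu=0$, where $V(\Phi^2;X)$ is the matrix whose columns are the values at $x_1,\dots,x_M$ of a basis of $\Phi^2=\operatorname{span}\{\phi_h\phi_k\}$.
   Context: $G(w)=V^t\operatorname{diag}(w)V$ and $E(w)=-\frac1N\log\det G(w)+\|w\|_1$ for $w$ with $\det G(w)>0$. *)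

theory Defs
  imports "HOL-Analysis.Analysis"
begin

definition vmat :: "('m::finite \<Rightarrow> real^'n) \<Rightarrow> ('k::finite \<Rightarrow> real^'n \<Rightarrow> real) \<Rightarrow> real^'k^'m"
  where "vmat x phi = (\<chi> i j. phi j (x i))"

definition diagm :: "real^'m::finite \<Rightarrow> real^'m^'m"
  where "diagm w = (\<chi> i j. if i = j then w $ i else 0)"

definition Gram :: "real^'k::finite^'m::finite \<Rightarrow> real^'m \<Rightarrow> real^'k^'k"
  where "Gram V w = transpose V ** diagm w ** V"

text \<open>E(w) = -(1/N) log det G(w) + ||w||_1, where on the nonnegative orthant
  ||w||_1 = sum of w_i.\<close>
definition Efun :: "real^'k::finite^'m::finite \<Rightarrow> real^'m \<Rightarrow> real"
  where "Efun V w = - (1 / real CARD('k)) * ln (det (Gram V w)) + (\<Sum>i\<in>UNIV. w $ i)"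

definition pderiv_at :: "'m::finite \<Rightarrow> (real^'m \<Rightarrow> real) \<Rightarrow> real^'m \<Rightarrow> real"
  where "pderiv_at i f w = deriv (\<lambda>t. f (w + t *\<^sub>R axis i 1)) 0"

definition hessian :: "(real^'m::finite \<Rightarrow> real) \<Rightarrow> real^'m \<Rightarrow> real^'m^'m"
  where "hessian f w = (\<chi> i j. pderiv_at i (\<lambda>v. pderiv_at j f v) w)"

end

theory Submission
  imports Defs
begin

(* Along a coordinate direction, G(w + s e_i) = G(w) + s v_i v_i^t with v_i the i-th row of V.
   Jacobi's formula gives the gradient 1 - v_j^t G^-1 v_j / N, and the Sherman-Morrison formula
   then gives the Hessian entries (v_i^t G^-1 v_j)^2 / N. For w >= 0 the inverse factors as
   G^-1 = B^t B, so with y_i = B v_i the quadratic form is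
   (1/N) sum_ij u_i u_j (y_i . y_j)^2 = |B M B^t|_F^2 / N, where M = V^t diag(u) V. As B^t B is
   invertible, this vanishes iff M = 0, and the entries of M are sum_i u_i phi_h(x_i) phi_k(x_i). *)

definition outer_prod :: "real^'k::finite \<Rightarrow> real^'l::finite \<Rightarrow> real^'l^'k"
  where "outer_prod a b = (\<chi> h l. a$h * b$l)"

lemma matrix_mult_outer_prod: "(X::real^'k::finite^'m::finite) ** outer_prod p q = outer_prod (X *v p) q"
  by (simp add: outer_prod_def vec_eq_iff matrix_matrix_mult_def matrix_vector_mult_def
      sum_distrib_left sum_distrib_right mult_ac)

lemma outer_prod_mult_matrix: "outer_prod p q ** (X::real^'m::finite^'k::finite) = outer_prod p (q v* X)"
  by (simp add: outer_prod_def vec_eq_iff matrix_matrix_mult_def vector_matrix_mult_def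
      sum_distrib_left mult_ac)

lemma outer_prod_mult_outer_prod: "outer_prod p q ** outer_prod r t = (q \<bullet> r) *\<^sub>R outer_prod p t"
  by (simp add: outer_prod_def vec_eq_iff matrix_matrix_mult_def inner_vec_def
      sum_distrib_left sum_distrib_right mult_ac)

lemma outer_prod_mult_vector: "outer_prod p q *v r = (q \<bullet> r) *\<^sub>R p"
  by (simp add: outer_prod_def vec_eq_iff matrix_vector_mult_def inner_vec_def
      sum_distrib_left mult_ac)

lemma outer_prod_add_left: "outer_prod (a + b) q = outer_prod a q + outer_prod b q"
  by (simp add: outer_prod_def vec_eq_iff algebra_simps)

lemma outer_prod_scaleR_left: "outer_prod (c *\<^sub>R a) q = c *\<^sub>R outer_prod a q"
  by (simp add: outer_prod_def vec_eq_iff)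

lemma trace_mult_outer_prod: "trace ((X::real^'k::finite^'k) ** outer_prod a a) = a \<bullet> (X *v a)"
  by (simp add: trace_def outer_prod_def matrix_matrix_mult_def matrix_vector_mult_def
      inner_vec_def sum_distrib_left mult_ac)

lemma matrix_add_rdistrib: "((A::'a::semiring_1^'n::finite^'m::finite) + B) ** C = A ** C + B ** C"
  by (simp add: vec_eq_iff matrix_matrix_mult_def sum.distrib algebra_simps)

lemma matrix_diff_ldistrib: "(A::'a::ring_1^'n::finite^'m::finite) ** (B - C) = A ** B - A ** C"
  by (simp add: vec_eq_iff matrix_matrix_mult_def sum_subtractf algebra_simps)

lemma inner_transpose_mult: "x \<bullet> ((transpose B ** B) *v y) = (B *v x) \<bullet> (B *v (y::real^'n::finite))"
  by (simp only: vector_transpose_matrix flip: matrix_vector_mul_assoc dot_lmul_matrix)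

lemma row_mult_transpose: "((V::'a::comm_semiring_1^'k::finite^'m::finite) ** transpose B) $ i = B *v (V $ i)"
  by (simp add: vec_eq_iff matrix_matrix_mult_def matrix_vector_mult_def transpose_def mult_ac)

lemma matrix_inv_right:
  assumes "invertible M"
  shows "M ** matrix_inv M = mat 1"
  using someI_ex[OF assms[unfolded invertible_def]] by (simp add: matrix_inv_def)

lemma matrix_inv_left:
  assumes "invertible M"
  shows "matrix_inv M ** M = mat 1"
  using someI_ex[OF assms[unfolded invertible_def]] by (simp add: matrix_inv_def)

lemma invertible_matrix_inv:
  fixes M :: "'a::field^'n::finite^'n"
  assumes "invertible M"
  shows "invertible (matrix_inv M)"
  using matrix_inv_left[OF assms] invertible_right_inverse by blast

lemma matrix_inv_unique:
  fixes M X :: "'a::field^'n::finite^'n"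
  assumes "M ** X = mat 1"
  shows "matrix_inv M = X"
proof -
  have "invertible M" using assms invertible_right_inverse by blast
  have "matrix_inv M = matrix_inv M ** (M ** X)" by (simp add: assms)
  also have "\<dots> = X" by (simp add: matrix_mul_assoc matrix_inv_left[OF \<open>invertible M\<close>])
  finally show ?thesis .
qed

lemma transpose_matrix_inv:
  fixes M :: "'a::field^'n::finite^'n"
  assumes "invertible M"
  shows "transpose (matrix_inv M) = matrix_inv (transpose M)"
proof -
  have "transpose M ** transpose (matrix_inv M) = mat 1"
    by (simp add: matrix_inv_left[OF assms] flip: matrix_transpose_mul)
  then show ?thesis by (simp add: matrix_inv_unique)
qed

lemma matrix_inv_rank_one_update:
  fixes G :: "real^'n::finite^'n"
  assumes "invertible G" and "1 + s * (a \<bullet> (matrix_inv G *v a)) \<noteq> 0"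
  shows "matrix_inv (G + s *\<^sub>R outer_prod a a) = matrix_inv G -
    (s / (1 + s * (a \<bullet> (matrix_inv G *v a)))) *\<^sub>R outer_prod (matrix_inv G *v a) (a v* matrix_inv G)"
proof -
  define A where "A = matrix_inv G"
  define c where "c = s / (1 + s * (a \<bullet> (A *v a)))"
  have c: "s - c - s * c * (a \<bullet> (A *v a)) = 0"
    using assms(2) by (simp add: c_def A_def field_simps)
  have "(G + s *\<^sub>R outer_prod a a) ** (A - c *\<^sub>R outer_prod (A *v a) (a v* A))
     = mat 1 + (s - c - s * c * (a \<bullet> (A *v a))) *\<^sub>R outer_prod a (a v* A)"
    by (simp add: A_def matrix_inv_right[OF assms(1)] matrix_add_rdistrib matrix_diff_ldistrib
        matrix_scalar_ac matrix_mult_outer_prod outer_prod_mult_matrix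
        outer_prod_mult_outer_prod outer_prod_mult_vector outer_prod_add_left outer_prod_scaleR_left
        matrix_vector_mul_assoc dot_lmul_matrix algebra_simps
        flip: scalar_matrix_assoc scaleR_matrix_vector_assoc)
  also have "\<dots> = mat 1" by (simp add: c)
  finally show ?thesis unfolding A_def c_def by (rule matrix_inv_unique)
qed

lemma congruence_eq_0_iff:
  fixes B :: "'a::field^'k::finite^'m::finite" and M :: "'a^'k^'k"
  assumes "invertible (transpose B ** B)"
  shows "B ** M ** transpose B = 0 \<longleftrightarrow> M = 0"
proof
  assume BMB: "B ** M ** transpose B = 0"
  define P where "P = transpose B ** B"
  have "M = (matrix_inv P ** P) ** M ** (P ** matrix_inv P)"
    using assms by (simp add: P_def matrix_inv_left matrix_inv_right)
  also have "\<dots> = matrix_inv P ** transpose B ** (B ** M ** transpose B) ** B ** matrix_inv P"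
    by (simp add: P_def matrix_mul_assoc)
  finally show "M = 0" by (simp add: BMB)
qed simp

section \<open>Jacobi's formula\<close>

lemma permutes_non_id_moves_other:
  assumes "p permutes UNIV" and "p \<noteq> id"
  obtains y where "y \<noteq> i" and "p y \<noteq> y"
proof -
  obtain z where z: "p z \<noteq> z" using assms(2) by (metis eq_id_iff)
  have "p (p z) \<noteq> p z"
    using z permutes_inj[OF assms(1)] by (metis injD)
  then show ?thesis using z that by metis
qed

lemma DERIV_det_mat1_plus:
  "((\<lambda>t. det (mat 1 + t *\<^sub>R (C::real^'n::finite^'n))) has_real_derivative trace C) (at 0)"
proof -
  define P where "P = {p. p permutes (UNIV::'n set)}"
  define f where "f p i t = (if i = p i then 1 else 0) + t * C$i$(p i)" for p :: "'n \<Rightarrow> 'n" and i t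
  define D where "D p = (\<Sum>i\<in>UNIV. C$i$(p i) * (\<Prod>y\<in>UNIV-{i}. f p y 0))" for p
  have det: "det (mat 1 + t *\<^sub>R C) = (\<Sum>p\<in>P. of_int (sign p) * (\<Prod>i\<in>UNIV. f p i t))" for t
    by (simp add: det_def mat_def f_def P_def)
  have "((\<lambda>t. \<Sum>p\<in>P. of_int (sign p) * (\<Prod>i\<in>UNIV. f p i t)) has_real_derivative
     (\<Sum>p\<in>P. of_int (sign p) * D p)) (at 0)"
    unfolding D_def by (intro DERIV_sum DERIV_cmult has_field_derivative_prod)
      (auto simp: f_def intro!: derivative_eq_intros)
  \<comment> \<open>A permutation other than the identity moves two points, so its product has two factors vanishing at 0.\<close>
  moreover have "(\<Sum>p\<in>P. of_int (sign p) * D p) = of_int (sign (id::'n \<Rightarrow> 'n)) * D id"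
  proof (rule sum.mono_neutral_right[where S = "{id}", simplified])
    show "finite P" by (simp add: P_def finite_permutations)
    show "id \<in> P" by (simp add: P_def permutes_id)
    show "\<forall>p\<in>P - {id}. of_int (sign p) * D p = 0"
    proof
      fix p assume "p \<in> P - {id}"
      then have p: "p permutes UNIV" "p \<noteq> id" by (auto simp: P_def)
      have factor_0: "(\<Prod>y\<in>UNIV-{i}. f p y 0) = 0" for i
      proof -
        obtain y where "y \<noteq> i" "p y \<noteq> y" using permutes_non_id_moves_other[OF p] .
        then show ?thesis by (intro prod_zero) (auto simp: f_def intro!: bexI[of _ y])
      qed
      show "of_int (sign p) * D p = 0" by (simp add: D_def factor_0)
    qed
  qed
  moreover have "of_int (sign (id::'n \<Rightarrow> 'n)) * D id = trace C"
    by (simp add: D_def f_def trace_def sign_id)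
  ultimately show ?thesis by (simp add: det)
qed

lemma DERIV_det_plus:
  fixes A B :: "real^'n::finite^'n"
  assumes "invertible A"
  shows "((\<lambda>t. det (A + t *\<^sub>R B)) has_real_derivative det A * trace (matrix_inv A ** B)) (at 0)"
proof -
  have "A + t *\<^sub>R B = A ** (mat 1 + t *\<^sub>R (matrix_inv A ** B))" for t
    by (simp add: matrix_add_ldistrib matrix_scalar_ac matrix_mul_assoc matrix_inv_right[OF assms]
        flip: scalar_matrix_assoc)
  then have "det (A + t *\<^sub>R B) = det A * det (mat 1 + t *\<^sub>R (matrix_inv A ** B))" for t
    by (simp add: det_mul)
  then show ?thesis by (simp add: DERIV_cmult DERIV_det_mat1_plus)
qed

section \<open>The Gram matrix and the energy\<close>

lemma Gram_nth: "Gram V w $ h $ l = (\<Sum>i\<in>UNIV. V$i$h * w$i * V$i$l)"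
  by (simp add: Gram_def diagm_def matrix_matrix_mult_def transpose_def sum_distrib_right
      if_distrib cong: if_cong)

lemma transpose_Gram: "transpose (Gram V w) = Gram V w"
  by (simp add: vec_eq_iff transpose_def Gram_nth mult_ac)

lemma Gram_add: "Gram V (v + w) = Gram V v + Gram V w"
  by (simp add: vec_eq_iff Gram_nth sum.distrib algebra_simps)

lemma Gram_scaleR: "Gram V (t *\<^sub>R w) = t *\<^sub>R Gram V w"
  by (simp add: vec_eq_iff Gram_nth sum_distrib_left mult_ac)

lemma Gram_axis: "Gram V (axis j 1) = outer_prod (V$j) (V$j)"
  by (simp add: vec_eq_iff Gram_nth outer_prod_def axis_def if_distrib if_distribR cong: if_cong)

lemma Gram_mult_transpose: "Gram (V ** transpose B) u = B ** Gram V u ** transpose B"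
  by (simp add: Gram_def matrix_transpose_mul matrix_mul_assoc)

lemma Gram_eq_transpose_mult:
  assumes "\<forall>i. 0 \<le> w$i"
  shows "Gram V w = transpose (\<chi> i h. sqrt (w$i) * V$i$h) ** (\<chi> i h. sqrt (w$i) * V$i$h)"
proof -
  have sqrt_sqrt: "sqrt (w$i) * (sqrt (w$i) * z) = w$i * z" for i z
    using assms by (simp flip: mult.assoc)
  show ?thesis
    by (simp add: sqrt_sqrt vec_eq_iff Gram_nth matrix_matrix_mult_def transpose_def mult_ac)
qed

lemma matrix_inv_Gram_factor:
  fixes V :: "real^'k::finite^'m::finite"
  assumes "\<forall>i. 0 \<le> w$i" and "invertible (Gram V w)"
  obtains B :: "real^'k^'m" where "matrix_inv (Gram V w) = transpose B ** B"
proof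
  define A where "A = matrix_inv (Gram V w)"
  define C :: "real^'k^'m" where "C = (\<chi> i h. sqrt (w$i) * V$i$h)"
  have "transpose (C ** A) ** (C ** A) = transpose A ** (Gram V w ** A)"
    using assms(1) by (simp add: C_def Gram_eq_transpose_mult matrix_transpose_mul matrix_mul_assoc)
  also have "\<dots> = A"
    using assms(2) by (simp add: A_def matrix_inv_right transpose_matrix_inv transpose_Gram)
  finally show "matrix_inv (Gram V w) = transpose (C ** A) ** (C ** A)"
    by (simp add: A_def)
qed

lemma sum_swap_pair:
  "(\<Sum>p\<in>P. \<Sum>q\<in>Q. \<Sum>i\<in>I. \<Sum>j\<in>J. f p q i j) =
   (\<Sum>i\<in>I. \<Sum>j\<in>J. \<Sum>p\<in>P. \<Sum>q\<in>Q. (f p q i j :: 'a::comm_monoid_add))"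
  by (simp only: sum.swap[where A = Q and B = I] sum.swap[where A = Q and B = J]
      sum.swap[where A = P and B = I] sum.swap[where A = P and B = J])

lemma sum_power2_Gram_nth:
  fixes W :: "real^'k::finite^'m::finite"
  shows "(\<Sum>p\<in>UNIV. \<Sum>q\<in>UNIV. (Gram W u $ p $ q)^2) =
    (\<Sum>i\<in>UNIV. \<Sum>j\<in>UNIV. u$i * u$j * ((W$i) \<bullet> (W$j))^2)"
proof -
  have "(\<Sum>p\<in>UNIV. \<Sum>q\<in>UNIV. (Gram W u $ p $ q)^2) =
    (\<Sum>p\<in>UNIV. \<Sum>q\<in>UNIV. \<Sum>i\<in>UNIV. \<Sum>j\<in>UNIV. u$i * u$j * (W$i$p * W$j$p) * (W$i$q * W$j$q))"
    by (simp add: Gram_nth power2_eq_square sum_product mult_ac)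
  also have "\<dots> =
    (\<Sum>i\<in>UNIV. \<Sum>j\<in>UNIV. \<Sum>p\<in>UNIV. \<Sum>q\<in>UNIV. u$i * u$j * (W$i$p * W$j$p) * (W$i$q * W$j$q))"
    by (rule sum_swap_pair)
  also have "\<dots> = (\<Sum>i\<in>UNIV. \<Sum>j\<in>UNIV. u$i * u$j * ((W$i) \<bullet> (W$j))^2)"
    by (simp add: inner_vec_def power2_eq_square sum_distrib_left sum_distrib_right mult_ac)
  finally show ?thesis .
qed

lemma sum_add_axis: "(\<Sum>i\<in>UNIV. (w + t *\<^sub>R axis j 1)$i) = (\<Sum>i\<in>UNIV. w$i) + (t::real)"
  by (simp add: sum.distrib axis_def flip: sum_distrib_left)

lemma DERIV_Efun_axis:
  fixes V :: "real^'k::finite^'m::finite"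
  assumes "det (Gram V w) > 0"
  shows "((\<lambda>t. Efun V (w + t *\<^sub>R axis j 1)) has_real_derivative
    1 - ((V$j) \<bullet> (matrix_inv (Gram V w) *v (V$j))) / real CARD('k)) (at 0)"
proof -
  define G where "G = Gram V w"
  define a where "a = V$j"
  have "invertible G" using assms invertible_det_nz G_def by force
  have Efun_axis: "Efun V (w + t *\<^sub>R axis j 1) =
      - (1 / real CARD('k)) * ln (det (G + t *\<^sub>R outer_prod a a)) + ((\<Sum>i\<in>UNIV. w$i) + t)" for t
    unfolding Efun_def sum_add_axis by (simp add: Gram_add Gram_scaleR Gram_axis G_def a_def)
  have "((\<lambda>t. det (G + t *\<^sub>R outer_prod a a)) has_real_derivative det G * (a \<bullet> (matrix_inv G *v a))) (at 0)"
    using DERIV_det_plus[OF \<open>invertible G\<close>, of "outer_prod a a"] by (simp add: trace_mult_outer_prod)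
  then show ?thesis
    unfolding Efun_axis using assms
    by (auto intro!: derivative_eq_intros simp: G_def a_def field_simps)
qed

lemma pderiv_Efun:
  fixes V :: "real^'k::finite^'m::finite"
  assumes "det (Gram V w) > 0"
  shows "pderiv_at j (Efun V) w = 1 - ((V$j) \<bullet> (matrix_inv (Gram V w) *v (V$j))) / real CARD('k)"
  unfolding pderiv_at_def by (rule DERIV_imp_deriv[OF DERIV_Efun_axis[OF assms]])

lemma eventually_det_Gram_add_axis_pos:
  fixes V :: "real^'k::finite^'m::finite"
  assumes "det (Gram V w) > 0"
  shows "\<forall>\<^sub>F s in nhds 0. det (Gram V (w + s *\<^sub>R axis i 1)) > 0"
proof -
  define G where "G = Gram V w"
  define a where "a = V$i"
  have "invertible G" using assms invertible_det_nz G_def by force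
  then have "isCont (\<lambda>s. det (G + s *\<^sub>R outer_prod a a)) 0"
    by (rule DERIV_isCont[OF DERIV_det_plus])
  then have "((\<lambda>s. det (G + s *\<^sub>R outer_prod a a)) \<longlongrightarrow> det G) (nhds 0)"
    using tendsto_at_iff_tendsto_nhds[of "\<lambda>s. det (G + s *\<^sub>R outer_prod a a)" 0]
    by (simp add: isCont_def)
  from order_tendstoD(1)[OF this] show ?thesis
    using assms by (simp add: Gram_add Gram_scaleR Gram_axis G_def a_def)
qed

lemma inner_matrix_inv_Gram_add_axis:
  fixes V :: "real^'k::finite^'m::finite" and w :: "real^'m"
  defines "A \<equiv> matrix_inv (Gram V w)"
  assumes "invertible (Gram V w)" and "1 + s * ((V$i) \<bullet> (A *v V$i)) \<noteq> 0"
  shows "(V$j) \<bullet> (matrix_inv (Gram V (w + s *\<^sub>R axis i 1)) *v V$j) =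
    (V$j) \<bullet> (A *v V$j) - s / (1 + s * ((V$i) \<bullet> (A *v V$i))) * ((V$i) \<bullet> (A *v V$j))^2"
proof -
  have "transpose A = A"
    using assms(2) by (simp add: A_def transpose_matrix_inv transpose_Gram)
  then have "x v* A = A *v x" for x
    by (metis vector_transpose_matrix)
  moreover have "(A *v x) \<bullet> y = x \<bullet> (A *v y)" for x y
    by (metis \<open>transpose A = A\<close> dot_lmul_matrix transpose_matrix_vector)
  ultimately show ?thesis
    using matrix_inv_rank_one_update[OF assms(2,3)[unfolded A_def]]
    by (simp add: Gram_add Gram_scaleR Gram_axis A_def matrix_vector_mult_diff_rdistrib
        outer_prod_mult_vector inner_diff_right power2_eq_square inner_commute
        flip: scaleR_matrix_vector_assoc)
qed

lemma hessian_Efun_nth: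
  fixes V :: "real^'k::finite^'m::finite"
  assumes "det (Gram V w) > 0"
  shows "hessian (Efun V) w $ i $ j =
    ((V$i) \<bullet> (matrix_inv (Gram V w) *v V$j))^2 / real CARD('k)"
proof -
  define A where "A = matrix_inv (Gram V w)"
  define N where "N = real CARD('k)"
  define \<alpha> where "\<alpha> = (V$i) \<bullet> (A *v V$i)"
  define \<beta> where "\<beta> = (V$j) \<bullet> (A *v V$j)"
  define \<gamma> where "\<gamma> = (V$i) \<bullet> (A *v V$j)"
  have "invertible (Gram V w)" using assms invertible_det_nz by force
  \<comment> \<open>Near 0, Sherman--Morrison makes the first partial derivative along w + s e_i rational in s.\<close>
  have "((\<lambda>s. 1 + s * \<alpha>) \<longlongrightarrow> 1) (nhds 0)"
    by (auto intro!: tendsto_eq_intros simp: filterlim_ident)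
  then have "\<forall>\<^sub>F s in nhds 0. 1 + s * \<alpha> > 0"
    by (rule order_tendstoD(1)) simp
  with eventually_det_Gram_add_axis_pos[OF assms, of i]
  have pderiv_near_0: "\<forall>\<^sub>F s in nhds 0.
    pderiv_at j (Efun V) (w + s *\<^sub>R axis i 1) = 1 - (\<beta> - s / (1 + s * \<alpha>) * \<gamma>^2) / N"
  proof eventually_elim
    case (elim s)
    then show ?case
      using inner_matrix_inv_Gram_add_axis[OF \<open>invertible (Gram V w)\<close>, of s i j]
      by (simp add: pderiv_Efun A_def N_def \<alpha>_def \<beta>_def \<gamma>_def)
  qed
  have "((\<lambda>s. 1 - (\<beta> - s / (1 + s * \<alpha>) * \<gamma>^2) / N) has_real_derivative \<gamma>^2 / N) (at 0)"
    by (auto intro!: derivative_eq_intros simp: N_def)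
  then have "((\<lambda>s. pderiv_at j (Efun V) (w + s *\<^sub>R axis i 1)) has_real_derivative \<gamma>^2 / N) (at 0)"
    by (simp add: DERIV_cong_ev[OF refl pderiv_near_0 refl])
  then have "pderiv_at i (pderiv_at j (Efun V)) w = \<gamma>^2 / N"
    unfolding pderiv_at_def[of i] by (rule DERIV_imp_deriv)
  then show ?thesis by (simp add: hessian_def \<gamma>_def A_def N_def)
qed

lemma quadratic_form_hessian_Efun:
  fixes V :: "real^'k::finite^'m::finite"
  assumes "det (Gram V w) > 0"
  shows "u \<bullet> (hessian (Efun V) w *v u) =
    (\<Sum>i\<in>UNIV. \<Sum>j\<in>UNIV. u$i * u$j * ((V$i) \<bullet> (matrix_inv (Gram V w) *v V$j))^2) / real CARD('k)"
  using assms by (simp add: hessian_Efun_nth inner_vec_def matrix_vector_mult_def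
      sum_distrib_left sum_divide_distrib mult_ac)

theorem mainTheorem3:
  fixes x :: "'m::finite \<Rightarrow> real^'n::finite"
    and phi :: "'k::finite \<Rightarrow> real^'n \<Rightarrow> real"
    and w u :: "real^'m"
  assumes "inj x"
    and "rank (vmat x phi) = CARD('k)"
    and "\<forall>i. w $ i \<ge> 0"
    and "det (Gram (vmat x phi) w) > 0"
  shows "u \<bullet> (hessian (Efun (vmat x phi)) w *v u) = 0 \<longleftrightarrow>
         (\<forall>h k. (\<Sum>i\<in>UNIV. u $ i * phi h (x i) * phi k (x i)) = 0)"
proof -
  define V where "V = vmat x phi"
  define A where "A = matrix_inv (Gram V w)"
  have det_pos: "det (Gram V w) > 0" using assms(4) by (simp add: V_def)
  then have "invertible (Gram V w)" using invertible_det_nz by force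
  then obtain B :: "real^'k^'m" where A_eq: "A = transpose B ** B"
    unfolding A_def by (rule matrix_inv_Gram_factor[OF assms(3)])
  have "invertible A"
    using \<open>invertible (Gram V w)\<close> by (simp add: A_def invertible_matrix_inv)
  define W where "W = V ** transpose B"
  have "(V$i) \<bullet> (A *v V$j) = (W$i) \<bullet> (W$j)" for i j
    by (simp add: A_eq W_def inner_transpose_mult row_mult_transpose)
  then have "u \<bullet> (hessian (Efun V) w *v u) = (\<Sum>p\<in>UNIV. \<Sum>q\<in>UNIV. (Gram W u $ p $ q)^2) / real CARD('k)"
    by (simp add: quadratic_form_hessian_Efun[OF det_pos] sum_power2_Gram_nth A_def)
  then have "u \<bullet> (hessian (Efun V) w *v u) = 0 \<longleftrightarrow> Gram W u = 0"
    by (simp add: sum_nonneg_eq_0_iff sum_nonneg vec_eq_iff)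
  also have "\<dots> \<longleftrightarrow> Gram V u = 0"
    using \<open>invertible A\<close> by (simp add: W_def A_eq Gram_mult_transpose congruence_eq_0_iff)
  also have "\<dots> \<longleftrightarrow> (\<forall>h k. (\<Sum>i\<in>UNIV. u $ i * phi h (x i) * phi k (x i)) = 0)"
    by (simp add: vec_eq_iff Gram_nth V_def vmat_def mult_ac)
  finally show ?thesis by (simp add: V_def)
qed

end
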